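(* Let $b_1,\dots,b_5$ and $\alpha_1,\dots,\alpha_5$ be positive real numbers with $\sum_{i=1}^5\alpha_i=\pi$ (in particular $(b_1,\dots,b_5)$ may be any rearrangement of given positive reals $a_1,\dots,a_5$ with $b_1=a_1$). Then $$\sum_{i=1}^5 b_i\cos\alpha_i\;\le\;\frac{1+\sqrt5}{4}\cdot\frac{1}{b_1b_2b_3b_4b_5}\,\phi(b_1^2,b_2^2,b_3^2,b_4^2,b_5^2).$$
   Context: For real numbers $x_1,\dots,x_5$, define $\phi(x_1,x_2,x_3,x_4,x_5)=x_1x_2x_3+x_2x_3x_4+x_3x_4x_5+x_4x_5x_1+x_5x_1x_2$. *)

theory Defs
  imports Complex_Main
begin

definition phi :: "real \<Rightarrow> real \<Rightarrow> real \<Rightarrow> real \<Rightarrow> real \<Rightarrow> real" where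
  "phi x1 x2 x3 x4 x5 = x1*x2*x3 + x2*x3*x4 + x3*x4*x5 + x4*x5*x1 + x5*x1*x2"

end

theory Submission
  imports Defs
begin

text \<open>
  Put \<open>T\<^sub>i = b\<^sub>i b\<^sub>i\<^sub>+\<^sub>1 b\<^sub>i\<^sub>+\<^sub>2 / (b\<^sub>i\<^sub>+\<^sub>3 b\<^sub>i\<^sub>+\<^sub>4)\<close> (indices mod 5), so that \<open>\<Sum> T\<^sub>i\<close> is
  \<open>phi (b\<^sub>1\<^sup>2, \<dots>, b\<^sub>5\<^sup>2) / (b\<^sub>1 \<cdots> b\<^sub>5)\<close> and each \<open>b\<^sub>j\<close> is \<open>sqrt (T\<^sub>i T\<^sub>i\<^sub>+\<^sub>1)\<close>
  for neighbours on a 5-cycle. Planar vectors of lengths \<open>sqrt T\<^sub>i\<close>, consecutive ones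
  enclosing the angles \<open>\<alpha>\<^sub>j\<close>, turn the left-hand side into a cyclic sum of inner
  products, the closing one with a sign flip because the angles add up to \<open>pi\<close>.
  Coordinatewise this is a quadratic form on the twisted 5-cycle, whose largest eigenvalue
  is \<open>cos (pi / 5) = (1 + sqrt 5) / 4\<close>.
\<close>

lemma twisted_cycle_form_le:
  fixes x1 x2 x3 x4 x5 :: real
  shows "x1*x2 + x2*x3 + x3*x4 + x4*x5 - x5*x1
    \<le> (1 + sqrt 5) / 4 * (x1^2 + x2^2 + x3^2 + x4^2 + x5^2)"
proof -
  define c :: real where "c = (1 + sqrt 5) / 4"
  have c_golden: "4*c*c = 2*c + 1"
    unfolding c_def by (simp add: field_simps power2_eq_square)
  have "sqrt 5 < 3"
    by (rule real_less_lsqrt) auto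
  then have c_bounds: "4*c - 1 > 0" "3 - 2*c > 0"
    unfolding c_def by simp_all
  text \<open>Alternating signs turn the twisted cycle into the ordinary one.\<close>
  define r1 r2 r3 r4 r5
    where r1_def: "r1 = x1" and r2_def: "r2 = -x2" and r3_def: "r3 = x3"
      and r4_def: "r4 = -x4" and r5_def: "r5 = x5"
  define k where "k = (3 - 2*c) * (4*c - 1)"
  have k_pos: "k > 0"
    unfolding k_def using c_bounds by simp
  define u1 u2 u3 u4 u5
    where u1_def: "u1 = r5 + r2 + 2*c*r1" and u2_def: "u2 = r1 + r3 + 2*c*r2"
      and u3_def: "u3 = r2 + r4 + 2*c*r3" and u4_def: "u4 = r3 + r5 + 2*c*r4"
      and u5_def: "u5 = r4 + r1 + 2*c*r5"
  define Q where "Q = c*(r1^2 + r2^2 + r3^2 + r4^2 + r5^2) + (r1*r2 + r2*r3 + r3*r4 + r4*r5 + r5*r1)"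
  text \<open>With \<open>A\<close> the adjacency operator of the 5-cycle, \<open>u = (A + 2c) r\<close> and the
    second family is \<open>(2 - A) u\<close>; both vanish on the kernel of \<open>Q = r \<bullet> (c + A/2) r\<close>.\<close>
  have sos: "k * (4*(1 + c) * Q)
    = k * (u1^2 + u2^2 + u3^2 + u4^2 + u5^2)
      + ((2*u1 - u5 - u2)^2 + (2*u2 - u1 - u3)^2 + (2*u3 - u2 - u4)^2
         + (2*u4 - u3 - u5)^2 + (2*u5 - u4 - u1)^2)"
    unfolding k_def u1_def u2_def u3_def u4_def u5_def Q_def using c_golden by algebra
  have "0 \<le> k * (4*(1 + c) * Q)"
    unfolding sos using k_pos by (intro add_nonneg_nonneg mult_nonneg_nonneg) auto
  moreover have "1 + c > 0"
    using c_bounds by simp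
  ultimately have "0 \<le> Q"
    using k_pos by (simp add: zero_le_mult_iff)
  then show ?thesis
    unfolding Q_def r1_def r2_def r3_def r4_def r5_def c_def by (simp add: algebra_simps)
qed

lemma mult_cos_diff:
  fixes x y f g :: real
  shows "x * y * cos (g - f) = (x * cos f) * (y * cos g) + (x * sin f) * (y * sin g)"
  by (simp add: cos_diff algebra_simps)

lemma polar_sq:
  fixes y f :: real
  shows "(y * cos f)^2 + (y * sin f)^2 = y^2"
proof -
  have "(y * cos f)^2 + (y * sin f)^2 = y^2 * ((sin f)^2 + (cos f)^2)"
    by (simp only: power_mult_distrib distrib_left add.commute)
  then show ?thesis
    by simp
qed

lemma cycle_cos_sum_le:
  fixes y1 y2 y3 y4 y5 t1 t2 t3 t4 t5 :: real
  assumes "t1 + t2 + t3 + t4 + t5 = pi"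
  shows "y1*y2*cos t1 + y2*y3*cos t2 + y3*y4*cos t3 + y4*y5*cos t4 + y5*y1*cos t5
    \<le> (1 + sqrt 5) / 4 * (y1^2 + y2^2 + y3^2 + y4^2 + y5^2)"
proof -
  text \<open>Polar angles of the planar vectors; the first one lies on the positive real axis.\<close>
  define f2 f3 f4 f5
    where f2_def: "f2 = t1" and f3_def: "f3 = f2 + t2" and f4_def: "f4 = f3 + t3"
      and f5_def: "f5 = f4 + t4"
  have t5: "t5 = pi - f5"
    using assms unfolding f2_def f3_def f4_def f5_def by simp
  have cos_parts:
    "y1*y2*cos t1 = y1 * (y2 * cos f2)"
    "y2*y3*cos t2 = (y2 * cos f2) * (y3 * cos f3) + (y2 * sin f2) * (y3 * sin f3)"
    "y3*y4*cos t3 = (y3 * cos f3) * (y4 * cos f4) + (y3 * sin f3) * (y4 * sin f4)"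
    "y4*y5*cos t4 = (y4 * cos f4) * (y5 * cos f5) + (y4 * sin f4) * (y5 * sin f5)"
    "y5*y1*cos t5 = - ((y5 * cos f5) * y1)"
    using mult_cos_diff[of y2 y3 f2 f3] mult_cos_diff[of y3 y4 f3 f4] mult_cos_diff[of y4 y5 f4 f5]
    unfolding f2_def f3_def f4_def f5_def t5 by simp_all
  have sum_sq: "y1^2 + y2^2 + y3^2 + y4^2 + y5^2
      = (y1^2 + (y2 * cos f2)^2 + (y3 * cos f3)^2 + (y4 * cos f4)^2 + (y5 * cos f5)^2)
        + (0^2 + (y2 * sin f2)^2 + (y3 * sin f3)^2 + (y4 * sin f4)^2 + (y5 * sin f5)^2)"
    using polar_sq[of y2 f2] polar_sq[of y3 f3] polar_sq[of y4 f4] polar_sq[of y5 f5] by simp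
  have "y1 * (y2 * cos f2) + (y2 * cos f2) * (y3 * cos f3) + (y3 * cos f3) * (y4 * cos f4)
      + (y4 * cos f4) * (y5 * cos f5) - (y5 * cos f5) * y1
    \<le> (1 + sqrt 5) / 4 * (y1^2 + (y2 * cos f2)^2 + (y3 * cos f3)^2 + (y4 * cos f4)^2 + (y5 * cos f5)^2)"
    by (rule twisted_cycle_form_le)
  moreover have "0 * (y2 * sin f2) + (y2 * sin f2) * (y3 * sin f3) + (y3 * sin f3) * (y4 * sin f4)
      + (y4 * sin f4) * (y5 * sin f5) - (y5 * sin f5) * 0
    \<le> (1 + sqrt 5) / 4 * (0^2 + (y2 * sin f2)^2 + (y3 * sin f3)^2 + (y4 * sin f4)^2 + (y5 * sin f5)^2)"
    by (rule twisted_cycle_form_le)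
  ultimately show ?thesis
    unfolding cos_parts sum_sq distrib_left by linarith
qed

theorem lemma2:
  fixes b1 b2 b3 b4 b5 a1 a2 a3 a4 a5 :: real
  assumes "b1 > 0" "b2 > 0" "b3 > 0" "b4 > 0" "b5 > 0"
    and "a1 > 0" "a2 > 0" "a3 > 0" "a4 > 0" "a5 > 0"
    and "a1 + a2 + a3 + a4 + a5 = pi"
  shows "b1 * cos a1 + b2 * cos a2 + b3 * cos a3 + b4 * cos a4 + b5 * cos a5
    \<le> (1 + sqrt 5) / 4 * (1 / (b1*b2*b3*b4*b5)) * phi (b1^2) (b2^2) (b3^2) (b4^2) (b5^2)"
proof -
  define T1 T2 T3 T4 T5
    where T1_def: "T1 = b1*b2*b3/(b4*b5)" and T2_def: "T2 = b3*b4*b5/(b1*b2)"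
      and T3_def: "T3 = b5*b1*b2/(b3*b4)" and T4_def: "T4 = b2*b3*b4/(b5*b1)"
      and T5_def: "T5 = b4*b5*b1/(b2*b3)"
  have T_pos: "T1 > 0" "T2 > 0" "T3 > 0" "T4 > 0" "T5 > 0"
    unfolding T1_def T2_def T3_def T4_def T5_def using assms(1-5) by simp_all
  have products:
    "sqrt T1 * sqrt T2 = b3" "sqrt T2 * sqrt T3 = b5" "sqrt T3 * sqrt T4 = b2"
    "sqrt T4 * sqrt T5 = b4" "sqrt T5 * sqrt T1 = b1"
    unfolding real_sqrt_mult[symmetric] T1_def T2_def T3_def T4_def T5_def
    using assms(1-5) by (simp_all add: field_simps power2_eq_square[symmetric])
  have squares: "(sqrt T1)^2 + (sqrt T2)^2 + (sqrt T3)^2 + (sqrt T4)^2 + (sqrt T5)^2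
      = 1 / (b1*b2*b3*b4*b5) * phi (b1^2) (b2^2) (b3^2) (b4^2) (b5^2)"
    using T_pos assms(1-5) unfolding phi_def T1_def T2_def T3_def T4_def T5_def
    by (simp add: field_simps power2_eq_square)
  have "a3 + a5 + a2 + a4 + a1 = pi"
    using assms(11) by simp
  from cycle_cos_sum_le[OF this, of "sqrt T1" "sqrt T2" "sqrt T3" "sqrt T4" "sqrt T5"]
  show ?thesis
    unfolding products squares by (simp add: mult.assoc algebra_simps)
qed

end
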